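(* Let $\mathcal{T}$ be an $\aleph_1$-directed poset, $X:\mathcal{T}\to\mathbf{Set}_*$ a diagram of pointed sets and $A$ an abelian group. Then $H(X,A)=0$, i.e. the natural map $\rho:(\lim_\mathcal{T}X)\wedge A\to\lim_\mathcal{T}(X\wedge A)$ is an isomorphism.
   Context: A poset $\mathcal{T}$ is $\aleph_1$-directed if every countable subset has an upper bound in $\mathcal{T}$; it is regarded as a category with a single morphism $t\to s$ whenever $t\ge s$. For a pointed set $Y$, $Y\wedge A:=\bigoplus_{Y\setminus\{*\}}A$ (finitely supported pointed maps $Y\to A$), functorial via $f_*(sv)=f(s)v$, where $sv$ is the element with value $v$ at $s$ ($*v=0$). $\rho(xv)(t)=x(t)v$; $G(X,A):=\lim_\mathcal{T}(X\wedge A)$, $K(X,A)=\mathrm{Im}\,\rho$, $H(X,A):=G(X,A)/K(X,A)$. *)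

theory Defs
  imports Main "HOL-Library.Countable_Set"
begin

definition aleph1_directed :: "('i::order) set \<Rightarrow> bool" where
  "aleph1_directed T \<longleftrightarrow> (\<forall>S\<subseteq>T. countable S \<longrightarrow> (\<exists>u\<in>T. \<forall>s\<in>S. s \<le> u))"

text \<open>A diagram of pointed sets over the poset: carrier X t, base point bp t, and for
s \<le> t (i.e. a morphism t \<rightarrow> s) a pointed map F t s : X t \<rightarrow> X s, functorially.\<close>
definition pointed_diagram ::
  "('i::order \<Rightarrow> 'a set) \<Rightarrow> ('i \<Rightarrow> 'a) \<Rightarrow> ('i \<Rightarrow> 'i \<Rightarrow> 'a \<Rightarrow> 'a) \<Rightarrow> bool" where
  "pointed_diagram X bp F \<longleftrightarrow>
     (\<forall>t. bp t \<in> X t) \<and>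
     (\<forall>t s x. s \<le> t \<longrightarrow> x \<in> X t \<longrightarrow> F t s x \<in> X s) \<and>
     (\<forall>t s. s \<le> t \<longrightarrow> F t s (bp t) = bp s) \<and>
     (\<forall>t x. x \<in> X t \<longrightarrow> F t t x = x) \<and>
     (\<forall>t s r x. r \<le> s \<longrightarrow> s \<le> t \<longrightarrow> x \<in> X t \<longrightarrow> F s r (F t s x) = F t r x)"

text \<open>The limit of the diagram (compatible families); its base point is bp itself.\<close>
definition lim_set ::
  "('i::order \<Rightarrow> 'a set) \<Rightarrow> ('i \<Rightarrow> 'i \<Rightarrow> 'a \<Rightarrow> 'a) \<Rightarrow> ('i \<Rightarrow> 'a) set" where
  "lim_set X F = {x. (\<forall>t. x t \<in> X t) \<and> (\<forall>t s. s \<le> t \<longrightarrow> F t s (x t) = x s)}"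

text \<open>Y \<and> A for a pointed set (Y, y0): finitely supported maps Y \<rightarrow> A vanishing at y0.\<close>
definition smash :: "'a set \<Rightarrow> 'a \<Rightarrow> ('a \<Rightarrow> 'b::ab_group_add) set" where
  "smash Y y0 = {g. g y0 = 0 \<and> finite {y. g y \<noteq> 0} \<and> (\<forall>y. y \<notin> Y \<longrightarrow> g y = 0)}"

text \<open>Functoriality f_* (s v) = f(s) v, extended additively; z0 is the base point of the target.\<close>
definition push :: "('a \<Rightarrow> 'c) \<Rightarrow> 'c \<Rightarrow> ('a \<Rightarrow> 'b::ab_group_add) \<Rightarrow> 'c \<Rightarrow> 'b" where
  "push f z0 g = (\<lambda>z. if z = z0 then 0 else (\<Sum>y\<in>{y. g y \<noteq> 0 \<and> f y = z}. g y))"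

definition G_lim ::
  "('i::order \<Rightarrow> 'a set) \<Rightarrow> ('i \<Rightarrow> 'a) \<Rightarrow> ('i \<Rightarrow> 'i \<Rightarrow> 'a \<Rightarrow> 'a) \<Rightarrow> ('i \<Rightarrow> 'a \<Rightarrow> 'b::ab_group_add) set" where
  "G_lim X bp F = {\<phi>. (\<forall>t. \<phi> t \<in> smash (X t) (bp t)) \<and>
                      (\<forall>t s. s \<le> t \<longrightarrow> push (F t s) (bp s) (\<phi> t) = \<phi> s)}"

text \<open>The natural map rho : (lim X) \<and> A \<rightarrow> lim (X \<and> A), rho(x v)(t) = x(t) v.\<close>
definition rho :: "('i \<Rightarrow> 'a) \<Rightarrow> (('i \<Rightarrow> 'a) \<Rightarrow> 'b::ab_group_add) \<Rightarrow> 'i \<Rightarrow> 'a \<Rightarrow> 'b" where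
  "rho bp g = (\<lambda>t. push (\<lambda>x. x t) (bp t) g)"

end

theory Submission
  imports Defs
begin

text \<open>
  Injectivity of rho needs only directedness: finitely many distinct compatible families are
  separated at a single index t, and there rho g t (x t) = g x.

  For surjectivity let phi be a compatible family of finitely supported functions. Pushing forward
  along a transition map cannot enlarge a support, so the support sizes of phi t grow with t; by
  aleph1-directedness they are bounded (an upper bound of a sequence of indices with ever larger
  supports would have an infinite support), hence constant from some index t0 on. Above t0 the
  transition maps therefore restrict to value-preserving bijections between the supports, so each
  point a of the support of phi t0 lies on exactly one compatible family x_a running through the
  supports, and phi = rho (sum over a of phi t0 a times x_a).
\<close>

abbreviation supp :: "('a \<Rightarrow> 'b::zero) \<Rightarrow> 'a set" where
  "supp g \<equiv> {y. g y \<noteq> 0}"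

lemma
  assumes "g \<in> smash Y y0"
  shows smash_base: "g y0 = 0"
    and finite_supp_smash: "finite (supp g)"
    and supp_smash_subset: "supp g \<subseteq> Y"
  using assms by (auto simp: smash_def)

lemma
  assumes "\<phi> \<in> G_lim X bp F"
  shows G_lim_smash: "\<phi> t \<in> smash (X t) (bp t)"
    and G_lim_push: "s \<le> t \<Longrightarrow> push (F t s) (bp s) (\<phi> t) = \<phi> s"
  using assms unfolding G_lim_def by auto

lemma push_eq_sum:
  assumes "finite S" "supp g \<subseteq> S"
  shows "push f z0 g z = (if z = z0 then 0 else sum g {y\<in>S. f y = z})"
  unfolding push_def using assms by (auto intro!: sum.mono_neutral_left)

lemma push_base [simp]: "push f z0 g z0 = 0"
  by (simp add: push_def)

lemma supp_push_subset: "supp (push f z0 g) \<subseteq> f ` supp g"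
proof
  fix z assume "z \<in> supp (push f z0 g)"
  then have "{y. g y \<noteq> 0 \<and> f y = z} \<noteq> {}"
    by (auto simp: push_def simp del: Collect_empty_eq split: if_splits)
  then show "z \<in> f ` supp g" by blast
qed

lemma push_in_smash:
  assumes "g \<in> smash Y y0" and "\<And>y. y \<in> Y \<Longrightarrow> f y \<in> Z"
  shows "push f z0 g \<in> smash Z z0"
proof -
  have "finite (supp (push f z0 g))"
    using finite_subset[OF supp_push_subset finite_imageI[OF finite_supp_smash[OF assms(1)]]] .
  moreover have "supp (push f z0 g) \<subseteq> Z"
    using supp_push_subset[of f z0 g] supp_smash_subset[OF assms(1)] assms(2) by blast
  ultimately show ?thesis by (auto simp: smash_def)
qed

lemma push_comp:
  assumes fin: "finite (supp h)" and base: "f z0 = z1"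
  shows "push f z1 (push g z0 h) = push (f \<circ> g) z1 h"
proof
  fix z
  have pg: "push g z0 h w = (if w = z0 then 0 else sum h {y\<in>supp h. g y = w})" for w
    by (rule push_eq_sum) (use fin in auto)
  show "push f z1 (push g z0 h) z = push (f \<circ> g) z1 h z"
  proof (cases "z = z1")
    case False
    have "push f z1 (push g z0 h) z = sum (push g z0 h) {w\<in>g ` supp h. f w = z}"
      using push_eq_sum[OF finite_imageI[OF fin] supp_push_subset[of g z0 h], of f z1 z] False
      by simp
    also have "\<dots> = (\<Sum>w\<in>{w\<in>g ` supp h. f w = z}. sum h {y\<in>supp h. g y = w})"
      by (rule sum.cong) (use pg False base in auto)
    also have "\<dots> = sum h (\<Union>w\<in>{w\<in>g ` supp h. f w = z}. {y\<in>supp h. g y = w})"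
      by (rule sum.UNION_disjoint[symmetric]) (use fin in auto)
    also have "(\<Union>w\<in>{w\<in>g ` supp h. f w = z}. {y\<in>supp h. g y = w})
        = {y\<in>supp h. (f \<circ> g) y = z}"
      by auto
    also have "sum h \<dots> = push (f \<circ> g) z1 h z"
      using push_eq_sum[OF fin, of h "f \<circ> g" z1 z] False by simp
    finally show ?thesis .
  qed simp
qed

lemma push_cong:
  assumes "\<And>y. g y \<noteq> 0 \<Longrightarrow> f y = f' y"
  shows "push f z0 g = push f' z0 g"
  unfolding push_def using assms by (intro ext) (auto intro!: sum.cong)

lemma push_add:
  assumes "finite (supp g)" "finite (supp h)"
  shows "push f z0 (\<lambda>y. g y + h y) z = push f z0 g z + push f z0 h z"
proof -
  let ?S = "supp g \<union> supp h"
  have fin: "finite ?S" using assms by simp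
  have "supp (\<lambda>y. g y + h y) \<subseteq> ?S" "supp g \<subseteq> ?S" "supp h \<subseteq> ?S" by auto
  then show ?thesis
    by (simp add: push_eq_sum[OF fin] sum.distrib)
qed

lemma push_apply_inj:
  assumes "inj_on f (insert y (supp g))" and "f y \<noteq> z0"
  shows "push f z0 g (f y) = g y"
proof -
  have "{y'. g y' \<noteq> 0 \<and> f y' = f y} = (if g y = 0 then {} else {y})"
    using assms(1) by (auto simp: inj_on_def)
  then show ?thesis using assms(2) by (simp add: push_def)
qed

lemma push_eqI:
  assumes inj: "inj_on f (supp g)" and img: "f ` supp g = supp h"
    and val: "\<And>y. g y \<noteq> 0 \<Longrightarrow> h (f y) = g y" and base: "h z0 = 0"
  shows "push f z0 g = h"
proof
  fix z
  show "push f z0 g z = h z"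
  proof (cases "z \<in> supp h")
    case True
    then obtain y where y: "g y \<noteq> 0" "z = f y" using img by blast
    have "inj_on f (insert y (supp g))" using inj y by (simp add: insert_absorb)
    moreover have "f y \<noteq> z0" using True y base by auto
    ultimately have "push f z0 g (f y) = g y" by (rule push_apply_inj)
    then show ?thesis using val y by simp
  next
    case False
    then show ?thesis using supp_push_subset[of f z0 g] img by auto
  qed
qed

lemma card_supp_push_le:
  assumes "finite (supp g)"
  shows "card (supp (push f z0 g)) \<le> card (supp g)"
  using card_mono[OF finite_imageI[OF assms] supp_push_subset] card_image_le[OF assms]
  by (rule order_trans)

lemma bij_betw_supp_push:
  assumes fin: "finite (supp g)" and card: "card (supp (push f z0 g)) = card (supp g)"
  shows "bij_betw f (supp g) (supp (push f z0 g))"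
proof -
  have "card (supp (push f z0 g)) \<le> card (f ` supp g)"
    by (rule card_mono[OF finite_imageI[OF fin] supp_push_subset])
  with card card_image_le[OF fin, of f] have card_img: "card (f ` supp g) = card (supp g)"
    by linarith
  then have "supp (push f z0 g) = f ` supp g"
    using card card_subset_eq[OF finite_imageI[OF fin] supp_push_subset[of f z0 g]] by simp
  with eq_card_imp_inj_on[OF fin card_img] show ?thesis
    by (simp add: bij_betw_def)
qed

lemma rho_add:
  assumes "finite (supp g)" "finite (supp h)"
  shows "rho bp (\<lambda>x. g x + h x) = (\<lambda>t y. rho bp g t y + rho bp h t y)"
  unfolding rho_def by (intro ext) (rule push_add[OF assms])

lemma directed_finite_upper_bound:
  fixes S :: "'i::order set"
  assumes directed: "\<And>s t :: 'i. \<exists>u. s \<le> u \<and> t \<le> u" and "finite S"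
  shows "\<exists>u. \<forall>s\<in>S. s \<le> u"
  using \<open>finite S\<close>
proof (induction rule: finite_induct)
  case (insert x S)
  then obtain u where "\<forall>s\<in>S. s \<le> u" by blast
  moreover obtain w where "x \<le> w" "u \<le> w" using directed by blast
  ultimately show ?case using order_trans by blast
qed simp

lemma aleph1_directed_upper_bound:
  fixes S :: "'i::order set"
  assumes "aleph1_directed (UNIV :: 'i set)" and "countable S"
  shows "\<exists>u. \<forall>s\<in>S. s \<le> u"
  using assms unfolding aleph1_directed_def by simp

lemma aleph1_directed_mono_has_max:
  fixes c :: "'i::order \<Rightarrow> nat"
  assumes dir: "aleph1_directed (UNIV :: 'i set)" and mono: "mono c"
  shows "\<exists>t0. \<forall>t. c t \<le> c t0"
proof -
  have "\<exists>N. \<forall>t. c t < N"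
  proof (rule ccontr)
    assume unbounded: "\<nexists>N. \<forall>t. c t < N"
    have "\<exists>t. n < c t" for n
      using unbounded less_Suc_eq_le not_le by blast
    then obtain f where f: "\<And>n. n < c (f n)" by metis
    obtain u where "\<forall>s\<in>range f. s \<le> u"
      using aleph1_directed_upper_bound[OF dir, of "range f"] by auto
    then have "c (f (c u)) \<le> c u" by (blast intro: monoD[OF mono])
    with f[of "c u"] show False by simp
  qed
  then obtain N where "\<forall>t. c t < N" by blast
  from ex_has_greatest_nat[of "\<lambda>_. True" undefined c N, OF TrueI] this show ?thesis
    by blast
qed

locale pointed_system =
  fixes X :: "'i::order \<Rightarrow> 'a set" and bp :: "'i \<Rightarrow> 'a"
    and F :: "'i \<Rightarrow> 'i \<Rightarrow> 'a \<Rightarrow> 'a"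
  assumes pointed_diagram: "pointed_diagram X bp F"
begin

lemma
  shows bp_in: "bp t \<in> X t"
    and map_in: "s \<le> t \<Longrightarrow> x \<in> X t \<Longrightarrow> F t s x \<in> X s"
    and map_bp: "s \<le> t \<Longrightarrow> F t s (bp t) = bp s"
    and map_id: "x \<in> X t \<Longrightarrow> F t t x = x"
    and map_comp: "r \<le> s \<Longrightarrow> s \<le> t \<Longrightarrow> x \<in> X t \<Longrightarrow> F s r (F t s x) = F t r x"
  using pointed_diagram unfolding pointed_diagram_def by simp_all

lemma
  assumes "x \<in> lim_set X F"
  shows lim_set_in: "x t \<in> X t"
    and lim_set_map: "s \<le> t \<Longrightarrow> F t s (x t) = x s"
  using assms unfolding lim_set_def by auto

lemma bp_in_lim_set: "bp \<in> lim_set X F"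
  unfolding lim_set_def using bp_in map_bp by simp

lemma rho_in_G_lim:
  assumes g: "g \<in> smash (lim_set X F) bp"
  shows "rho bp g \<in> G_lim X bp F"
  unfolding G_lim_def
proof (intro CollectI conjI allI impI)
  fix t
  show "rho bp g t \<in> smash (X t) (bp t)"
    unfolding rho_def by (rule push_in_smash[OF g lim_set_in])
next
  fix t s :: 'i assume st: "s \<le> t"
  have "push (F t s) (bp s) (rho bp g t) = push (F t s \<circ> (\<lambda>x. x t)) (bp s) g"
    unfolding rho_def by (rule push_comp[of g "F t s" "bp t" "bp s" "\<lambda>x. x t",
        OF finite_supp_smash[OF g] map_bp[OF st]])
  also have "\<dots> = push (\<lambda>x. x s) (bp s) g"
    by (rule push_cong) (use supp_smash_subset[OF g] lim_set_map st in auto)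
  finally show "push (F t s) (bp s) (rho bp g t) = rho bp g s"
    unfolding rho_def .
qed

end

locale directed_pointed_system = pointed_system X bp F
  for X :: "'i::order \<Rightarrow> 'a set" and bp F +
  assumes directed: "\<And>s t :: 'i. \<exists>u. s \<le> u \<and> t \<le> u"
begin

lemma lim_set_separated:
  assumes fin: "finite D" and sub: "D \<subseteq> lim_set X F"
  shows "\<exists>t. inj_on (\<lambda>x. x t) D"
proof -
  define \<tau> where "\<tau> x y = (SOME t. x t \<noteq> y t)" for x y :: "'i \<Rightarrow> 'a"
  have \<tau>: "x (\<tau> x y) \<noteq> y (\<tau> x y)" if "x \<noteq> y" for x y
  proof -
    from that obtain t where "x t \<noteq> y t" by (auto simp: fun_eq_iff)
    then show ?thesis unfolding \<tau>_def by (rule someI)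
  qed
  have "finite ((\<lambda>(x, y). \<tau> x y) ` (D \<times> D))" using fin by simp
  then obtain u where "\<forall>s\<in>(\<lambda>(x, y). \<tau> x y) ` (D \<times> D). s \<le> u"
    using directed_finite_upper_bound[OF directed] by blast
  then have u: "\<tau> x y \<le> u" if "x \<in> D" "y \<in> D" for x y
    using that by blast
  have "x = y" if "x \<in> D" "y \<in> D" "x u = y u" for x y
  proof (rule ccontr)
    assume ne: "x \<noteq> y"
    have "x (\<tau> x y) = F u (\<tau> x y) (x u)"
      using lim_set_map[of x, OF _ u] that sub by auto
    also have "\<dots> = y (\<tau> x y)"
      using lim_set_map[of y, OF _ u] that sub by auto
    finally show False using \<tau>[OF ne] by contradiction
  qed
  then show ?thesis by (auto intro: inj_onI)
qed

lemma inj_on_rho: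
  "inj_on (rho bp :: (('i \<Rightarrow> 'a) \<Rightarrow> 'b::ab_group_add) \<Rightarrow> _) (smash (lim_set X F) bp)"
proof (rule inj_onI)
  fix g h :: "('i \<Rightarrow> 'a) \<Rightarrow> 'b"
  assume g: "g \<in> smash (lim_set X F) bp" and h: "h \<in> smash (lim_set X F) bp"
    and eq: "rho bp g = rho bp h"
  show "g = h"
  proof
    fix x
    show "g x = h x"
    proof (cases "x \<in> lim_set X F \<and> x \<noteq> bp")
      case False
      then have "g x = 0" "h x = 0"
        using smash_base[OF g] smash_base[OF h] supp_smash_subset[OF g] supp_smash_subset[OF h]
        by auto
      then show ?thesis by simp
    next
      case True
      let ?D = "insert x (insert bp (supp g \<union> supp h))"
      have "finite ?D"
        using finite_supp_smash[OF g] finite_supp_smash[OF h] by simp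
      moreover have "?D \<subseteq> lim_set X F"
        using True bp_in_lim_set supp_smash_subset[OF g] supp_smash_subset[OF h] by auto
      ultimately obtain t where inj: "inj_on (\<lambda>y. y t) ?D"
        by (blast dest: lim_set_separated)
      have base: "x t \<noteq> bp t"
        using True inj_onD[OF inj, of x bp] by auto
      have "rho bp g t (x t) = g x"
        unfolding rho_def
        by (rule push_apply_inj[of "\<lambda>y. y t" x g "bp t", OF inj_on_subset[OF inj] base]) blast
      moreover have "rho bp h t (x t) = h x"
        unfolding rho_def
        by (rule push_apply_inj[of "\<lambda>y. y t" x h "bp t", OF inj_on_subset[OF inj] base]) blast
      ultimately show ?thesis using eq by simp
    qed
  qed
qed

lemma lim_set_extension:
  assumes y_in: "\<And>u. t0 \<le> u \<Longrightarrow> y u \<in> X u"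
    and y_map: "\<And>u w. t0 \<le> u \<Longrightarrow> u \<le> w \<Longrightarrow> F w u (y w) = y u"
  shows "\<exists>x\<in>lim_set X F. \<forall>u. t0 \<le> u \<longrightarrow> x u = y u"
proof -
  define ub where "ub t = (SOME u. t \<le> u \<and> t0 \<le> u)" for t
  have ub: "t \<le> ub t" "t0 \<le> ub t" for t
    using someI_ex[OF directed[of t t0]] unfolding ub_def by auto
  define x where "x t = F (ub t) t (y (ub t))" for t
  have x_eq: "x t = F u t (y u)" if tu: "t \<le> u" and u: "t0 \<le> u" for t u
  proof -
    obtain w where w: "ub t \<le> w" "u \<le> w" using directed by blast
    have w0: "t0 \<le> w" using u w(2) by (rule order_trans)
    have "x t = F (ub t) t (F w (ub t) (y w))"
      unfolding x_def using y_map[OF ub(2) w(1)] by simp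
    also have "\<dots> = F w t (y w)" by (rule map_comp[OF ub(1) w(1) y_in[OF w0]])
    also have "\<dots> = F u t (F w u (y w))" by (rule map_comp[OF tu w(2) y_in[OF w0], symmetric])
    also have "\<dots> = F u t (y u)" using y_map[OF u w(2)] by simp
    finally show ?thesis .
  qed
  have "x \<in> lim_set X F"
    unfolding lim_set_def
  proof (intro CollectI conjI allI impI)
    fix t
    show "x t \<in> X t" unfolding x_def by (rule map_in[OF ub(1) y_in[OF ub(2)]])
  next
    fix t s :: 'i assume st: "s \<le> t"
    have "F t s (x t) = F (ub t) s (y (ub t))"
      unfolding x_def by (rule map_comp[OF st ub(1) y_in[OF ub(2)]])
    also have "\<dots> = x s" using x_eq[OF order_trans[OF st ub(1)] ub(2)] by simp
    finally show "F t s (x t) = x s" .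
  qed
  moreover have "x u = y u" if "t0 \<le> u" for u
    using x_eq[OF order_refl that] map_id[OF y_in[OF that]] by simp
  ultimately show ?thesis by blast
qed

end

locale aleph1_pointed_system = pointed_system X bp F
  for X :: "'i::order \<Rightarrow> 'a set" and bp F +
  assumes aleph1: "aleph1_directed (UNIV :: 'i set)"

sublocale aleph1_pointed_system \<subseteq> directed_pointed_system
proof unfold_locales
  fix s t :: 'i
  show "\<exists>u. s \<le> u \<and> t \<le> u"
    using aleph1_directed_upper_bound[OF aleph1, of "{s, t}"] by auto
qed

context aleph1_pointed_system
begin

context
  fixes \<phi> :: "'i \<Rightarrow> 'a \<Rightarrow> 'b::ab_group_add"
  assumes \<phi>: "\<phi> \<in> G_lim X bp F"
begin

lemma finite_supp_G_lim: "finite (supp (\<phi> t))"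
  by (rule finite_supp_smash[OF G_lim_smash[OF \<phi>]])

lemma mono_card_supp_G_lim: "mono (\<lambda>t. card (supp (\<phi> t)))"
proof (rule monoI)
  fix s t :: 'i assume st: "s \<le> t"
  show "card (supp (\<phi> s)) \<le> card (supp (\<phi> t))"
    using card_supp_push_le[OF finite_supp_G_lim, of "F t s" "bp s" t] G_lim_push[OF \<phi> st]
    by simp
qed

lemma card_supp_G_lim_stabilizes:
  obtains t0 where "\<And>t. t0 \<le> t \<Longrightarrow> card (supp (\<phi> t)) = card (supp (\<phi> t0))"
proof -
  obtain t0 where "\<forall>t. card (supp (\<phi> t)) \<le> card (supp (\<phi> t0))"
    using aleph1_directed_mono_has_max[OF aleph1 mono_card_supp_G_lim] by blast
  with mono_card_supp_G_lim show ?thesis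
    by (intro that) (auto intro: antisym dest: monoD)
qed

context
  fixes t0 :: 'i
  assumes stable: "\<And>t. t0 \<le> t \<Longrightarrow> card (supp (\<phi> t)) = card (supp (\<phi> t0))"
begin

lemma bij_betw_map_supp:
  assumes "t0 \<le> s" "s \<le> t"
  shows "bij_betw (F t s) (supp (\<phi> t)) (supp (\<phi> s))"
proof -
  have "card (supp (\<phi> s)) = card (supp (\<phi> t))"
    using stable[OF assms(1)] stable[OF order_trans[OF assms]] by simp
  then show ?thesis
    using bij_betw_supp_push[OF finite_supp_G_lim, of "F t s" "bp s" t] G_lim_push[OF \<phi> assms(2)]
    by simp
qed

lemma map_supp_value:
  assumes "t0 \<le> s" "s \<le> t" "y \<in> supp (\<phi> t)"
  shows "\<phi> s (F t s y) = \<phi> t y"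
proof -
  have bij: "bij_betw (F t s) (supp (\<phi> t)) (supp (\<phi> s))"
    by (rule bij_betw_map_supp[OF assms(1,2)])
  then have "inj_on (F t s) (insert y (supp (\<phi> t)))"
    using assms(3) by (simp add: bij_betw_def insert_absorb)
  moreover have "F t s y \<noteq> bp s"
    using bij_betw_apply[OF bij assms(3)] smash_base[OF G_lim_smash[OF \<phi>]] by auto
  ultimately have "push (F t s) (bp s) (\<phi> t) (F t s y) = \<phi> t y"
    by (rule push_apply_inj)
  then show ?thesis using G_lim_push[OF \<phi> assms(2)] by simp
qed

definition threads :: "('i \<Rightarrow> 'a) set" where
  "threads = {x \<in> lim_set X F. \<forall>t. t0 \<le> t \<longrightarrow> \<phi> t (x t) \<noteq> 0}"

lemma inj_on_eval_threads:
  assumes u: "t0 \<le> u"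
  shows "inj_on (\<lambda>x. x u) threads"
proof (rule inj_onI)
  fix x y assume x: "x \<in> threads" and y: "y \<in> threads" and eq: "x u = y u"
  show "x = y"
  proof
    fix t
    obtain w where tw: "t \<le> w" and uw: "u \<le> w" using directed by blast
    have w: "t0 \<le> w" using u uw by (rule order_trans)
    have "inj_on (F w u) (supp (\<phi> w))"
      using bij_betw_map_supp[OF u uw] by (rule bij_betw_imp_inj_on)
    moreover have "x w \<in> supp (\<phi> w)" "y w \<in> supp (\<phi> w)"
      using x y w unfolding threads_def by auto
    moreover have "F w u (x w) = F w u (y w)"
      using x y eq uw lim_set_map unfolding threads_def by auto
    ultimately have "x w = y w" by (auto dest: inj_onD)
    moreover have "x \<in> lim_set X F" "y \<in> lim_set X F"
      using x y unfolding threads_def by auto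
    ultimately show "x t = y t"
      using lim_set_map tw by metis
  qed
qed

lemma eval_threads_t0: "(\<lambda>x. x t0) ` threads = supp (\<phi> t0)"
proof
  show "(\<lambda>x. x t0) ` threads \<subseteq> supp (\<phi> t0)"
    unfolding threads_def by auto
next
  show "supp (\<phi> t0) \<subseteq> (\<lambda>x. x t0) ` threads"
  proof
    fix a assume a: "a \<in> supp (\<phi> t0)"
    define y where "y u = inv_into (supp (\<phi> u)) (F u t0) a" for u
    have y_supp: "y u \<in> supp (\<phi> u)" and y_map: "F u t0 (y u) = a" if u: "t0 \<le> u" for u
    proof -
      have img: "a \<in> F u t0 ` supp (\<phi> u)"
        using a bij_betw_imp_surj_on[OF bij_betw_map_supp[OF order_refl u]] by simp
      show "y u \<in> supp (\<phi> u)" unfolding y_def by (rule inv_into_into[OF img])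
      show "F u t0 (y u) = a" unfolding y_def by (rule f_inv_into_f[OF img])
    qed
    have y_in: "y u \<in> X u" if "t0 \<le> u" for u
      using y_supp[OF that] supp_smash_subset[OF G_lim_smash[OF \<phi>]] by blast
    have y_compat: "F w u (y w) = y u" if u: "t0 \<le> u" and uw: "u \<le> w" for u w
    proof -
      have w: "t0 \<le> w" using u uw by (rule order_trans)
      have inj: "inj_on (F u t0) (supp (\<phi> u))"
        using bij_betw_map_supp[OF order_refl u] by (rule bij_betw_imp_inj_on)
      have "F w u (y w) \<in> supp (\<phi> u)"
        using bij_betw_apply[OF bij_betw_map_supp[OF u uw] y_supp[OF w]] .
      moreover have "F u t0 (F w u (y w)) = a"
        using map_comp[OF u uw y_in[OF w]] y_map[OF w] by simp
      ultimately have "inv_into (supp (\<phi> u)) (F u t0) a = F w u (y w)"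
        by (rule inv_into_f_eq[OF inj])
      then show ?thesis by (simp add: y_def)
    qed
    obtain x where x: "x \<in> lim_set X F" and xy: "\<And>u. t0 \<le> u \<Longrightarrow> x u = y u"
      using lim_set_extension[OF y_in y_compat] by blast
    have "x \<in> threads" unfolding threads_def using x xy y_supp by auto
    moreover have "x t0 = a"
      using xy[OF order_refl] y_map[OF order_refl] map_id[OF y_in[OF order_refl]] by simp
    ultimately show "a \<in> (\<lambda>x. x t0) ` threads" by blast
  qed
qed

lemma bij_betw_eval_threads:
  assumes u: "t0 \<le> u"
  shows "bij_betw (\<lambda>x. x u) threads (supp (\<phi> u))"
proof -
  have "bij_betw (\<lambda>x. x t0) threads (supp (\<phi> t0))"
    by (simp add: bij_betw_def inj_on_eval_threads eval_threads_t0)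
  moreover have "bij_betw (F u t0 \<circ> (\<lambda>x. x u)) threads (supp (\<phi> t0))
      \<longleftrightarrow> bij_betw (\<lambda>x. x t0) threads (supp (\<phi> t0))"
    by (rule bij_betw_cong) (use lim_set_map[OF _ u] in \<open>auto simp: threads_def\<close>)
  ultimately have "bij_betw (F u t0 \<circ> (\<lambda>x. x u)) threads (supp (\<phi> t0))"
    by blast
  moreover have "(\<lambda>x. x u) ` threads \<subseteq> supp (\<phi> u)"
    using u unfolding threads_def by auto
  ultimately show ?thesis
    using bij_betw_comp_iff2[OF bij_betw_map_supp[OF order_refl u]] by blast
qed

definition lift :: "('i \<Rightarrow> 'a) \<Rightarrow> 'b" where
  "lift x = (if x \<in> threads then \<phi> t0 (x t0) else 0)"

lemma supp_lift: "supp lift = threads"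
  unfolding lift_def threads_def by auto

lemma lift_in_smash: "lift \<in> smash (lim_set X F) bp"
proof -
  have "finite threads"
    using bij_betw_finite[OF bij_betw_eval_threads[OF order_refl]] finite_supp_G_lim by blast
  moreover have "lift bp = 0"
    using smash_base[OF G_lim_smash[OF \<phi>]] unfolding lift_def by simp
  moreover have "threads \<subseteq> lim_set X F" unfolding threads_def by blast
  ultimately show ?thesis
    unfolding smash_def using supp_lift by auto
qed

lemma rho_lift_above:
  assumes u: "t0 \<le> u"
  shows "rho bp lift u = \<phi> u"
  unfolding rho_def
proof (rule push_eqI)
  have bij: "bij_betw (\<lambda>x. x u) (supp lift) (supp (\<phi> u))"
    using bij_betw_eval_threads[OF u] by (simp add: supp_lift)
  then show "inj_on (\<lambda>x. x u) (supp lift)" "(\<lambda>x. x u) ` supp lift = supp (\<phi> u)"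
    by (auto simp: bij_betw_def)
  fix x assume "lift x \<noteq> 0"
  then have x: "x \<in> threads" by (simp add: supp_lift[symmetric])
  then have "x t0 = F u t0 (x u)" and "x u \<in> supp (\<phi> u)"
    using u lim_set_map[OF _ u] unfolding threads_def by auto
  then show "\<phi> u (x u) = lift x"
    using x map_supp_value[OF order_refl u] unfolding lift_def by simp
next
  show "\<phi> u (bp u) = 0" by (rule smash_base[OF G_lim_smash[OF \<phi>]])
qed

lemma rho_lift: "rho bp lift = \<phi>"
proof
  fix t
  obtain u where tu: "t \<le> u" and u: "t0 \<le> u" using directed by blast
  have "rho bp lift t = push (F u t) (bp t) (rho bp lift u)"
    using G_lim_push[OF rho_in_G_lim[OF lift_in_smash] tu] by simp
  also have "\<dots> = \<phi> t"
    using rho_lift_above[OF u] G_lim_push[OF \<phi> tu] by simp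
  finally show "rho bp lift t = \<phi> t" .
qed

end

lemma G_lim_in_image_rho: "\<phi> \<in> rho bp ` smash (lim_set X F) bp"
proof -
  obtain t0 where stable: "\<And>t. t0 \<le> t \<Longrightarrow> card (supp (\<phi> t)) = card (supp (\<phi> t0))"
    using card_supp_G_lim_stabilizes by blast
  have "lift t0 \<in> smash (lim_set X F) bp" using stable by (rule lift_in_smash)
  moreover have "rho bp (lift t0) = \<phi>" using stable by (rule rho_lift)
  ultimately show ?thesis
    by (intro image_eqI[where x = "lift t0"]) simp_all
qed

end

lemma bij_betw_rho:
  "bij_betw (rho bp :: (('i \<Rightarrow> 'a) \<Rightarrow> 'b::ab_group_add) \<Rightarrow> _)
     (smash (lim_set X F) bp) (G_lim X bp F)"
  unfolding bij_betw_def
proof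
  show "rho bp ` smash (lim_set X F) bp = G_lim X bp F"
    using rho_in_G_lim G_lim_in_image_rho by blast
qed (rule inj_on_rho)

end

theorem mainTheorem10:
  fixes X :: "'i::order \<Rightarrow> 'a set" and bp :: "'i \<Rightarrow> 'a"
    and F :: "'i \<Rightarrow> 'i \<Rightarrow> 'a \<Rightarrow> 'a"
  assumes "aleph1_directed (UNIV :: 'i set)"
    and "pointed_diagram X bp F"
  shows "bij_betw (rho bp :: (('i \<Rightarrow> 'a) \<Rightarrow> 'b::ab_group_add) \<Rightarrow> _)
            (smash (lim_set X F) bp) (G_lim X bp F)
       \<and> (\<forall>g\<in>smash (lim_set X F) bp. \<forall>h\<in>smash (lim_set X F) bp.
            rho bp (\<lambda>x. g x + h x) = (\<lambda>t y. rho bp g t y + rho bp h t y))"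
proof -
  interpret aleph1_pointed_system X bp F
    using assms by unfold_locales
  show ?thesis
    using bij_betw_rho rho_add[OF finite_supp_smash finite_supp_smash] by blast
qed

end
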